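(* Let $k\ge2$, let $M$ be a $k$-permutable monoid and let $L\in\mathfrak{L}_{Rat}(M)$. Then there exists a positive integer $m$ such that for every word $w\in L$ with $|w|\ge m$ and every factorization $w=w_1w_2\cdots w_m$ with $|w_i|\ge 1$ for $1\le i\le m$, there exist integers $0\le i_0<i_1<\cdots<i_k<i_{k+1}\le m$ such that $w=\lambda W_1W_2\cdots W_k\mu$, where $\lambda=w_1\cdots w_{i_0}$ (empty if $i_0=0$), $\mu=w_{i_{k+1}}\cdots w_m$ (empty if $i_{k+1}=m$), and $W_j=w_{1+i_{j-1}}\cdots w_{i_j}$ for $j=1,\dots,k$, and there is a permutation $\sigma$ of $\{1,\dots,k\}$, different from the identity, such that the word $\lambda W_{\sigma(1)}W_{\sigma(2)}\cdots W_{\sigma(k)}\mu$ belongs to $L$.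
   Context: A monoid $M$ is $k$-permutable if for all $s_1,\dots,s_k\in M$ there is a permutation $\sigma\neq\mathrm{id}$ of $\{1,\dots,k\}$ with $s_1\cdots s_k=s_{\sigma(1)}\cdots s_{\sigma(k)}$. An $M$-automaton is a tuple $(Q,\Sigma,M,\delta,q_0,Q_a)$ with finite state set, input alphabet $\Sigma$, initial state $q_0$, accept states $Q_a$, and $\delta: Q\times(\Sigma\cup\{\varepsilon\})\to\mathbb{P}(Q\times M)$ finite-valued; $(q',m)\in\delta(q,\sigma)$ means reading $\sigma$ in state $q$ it may go to $q'$ and multiply the register on the right by $m$. A rational monoid automaton over $M$ is an $M$-automaton with rational subsets $I_0,I_1\subseteq M$ (closure of finite subsets under union, product, Kleene star); $w$ is accepted if some computation reading $w$ from $q_0$ to an accept state has register product $x$ with $x_0x\in I_1$ for some $x_0\in I_0$. $\mathfrak{L}_{Rat}(M)$ is the family of languages so accepted. *)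

theory Defs
  imports "HOL-Combinatorics.Permutations"
begin

definition k_permutable :: "nat \<Rightarrow> 'm::monoid_mult itself \<Rightarrow> bool" where
  "k_permutable k _ \<longleftrightarrow>
     (\<forall>s :: nat \<Rightarrow> 'm. \<exists>\<sigma>. \<sigma> permutes {1..k} \<and> \<sigma> \<noteq> id \<and>
        prod_list (map s [1..<k+1]) = prod_list (map (s \<circ> \<sigma>) [1..<k+1]))"

definition set_prod :: "'m::monoid_mult set \<Rightarrow> 'm set \<Rightarrow> 'm set" where
  "set_prod A B = {a * b | a b. a \<in> A \<and> b \<in> B}"

definition set_star :: "'m::monoid_mult set \<Rightarrow> 'm set" where
  "set_star A = {prod_list xs | xs. xs \<in> lists A}"

inductive_set rat_subsets :: "'m::monoid_mult set set" where
  fin: "finite A \<Longrightarrow> A \<in> rat_subsets"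
| un: "A \<in> rat_subsets \<Longrightarrow> B \<in> rat_subsets \<Longrightarrow> A \<union> B \<in> rat_subsets"
| prod: "A \<in> rat_subsets \<Longrightarrow> B \<in> rat_subsets \<Longrightarrow> set_prod A B \<in> rat_subsets"
| star: "A \<in> rat_subsets \<Longrightarrow> set_star A \<in> rat_subsets"

text \<open>M-automata. Transition function: delta q None is the epsilon move,
  delta q (Some a) reads letter a; a pair (q', m) means go to q' and multiply
  the register on the right by m.\<close>

definition is_M_automaton ::
  "'q set \<Rightarrow> 'a set \<Rightarrow> ('q \<Rightarrow> 'a option \<Rightarrow> ('q \<times> 'm) set) \<Rightarrow> 'q \<Rightarrow> 'q set \<Rightarrow> bool" where
  "is_M_automaton Q Sig delta q0 Qa \<longleftrightarrow>
     finite Q \<and> finite Sig \<and> q0 \<in> Q \<and> Qa \<subseteq> Q \<and>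
     (\<forall>q \<in> Q. \<forall>a. finite (delta q a) \<and> fst ` delta q a \<subseteq> Q) \<and>
     (\<forall>q \<in> Q. \<forall>a. a \<notin> Sig \<longrightarrow> delta q (Some a) = {})"

inductive run_M :: "('q \<Rightarrow> 'a option \<Rightarrow> ('q \<times> 'm::monoid_mult) set) \<Rightarrow> 'q \<Rightarrow> 'a list \<Rightarrow> 'm \<Rightarrow> 'q \<Rightarrow> bool"
  for delta where
  nil: "run_M delta q [] 1 q"
| read: "(q', m) \<in> delta q (Some a) \<Longrightarrow> run_M delta q' w x q'' \<Longrightarrow> run_M delta q (a # w) (m * x) q''"
| eps: "(q', m) \<in> delta q None \<Longrightarrow> run_M delta q' w x q'' \<Longrightarrow> run_M delta q w (m * x) q''"

definition rat_lang ::
  "'q set \<Rightarrow> 'a set \<Rightarrow> ('q \<Rightarrow> 'a option \<Rightarrow> ('q \<times> 'm::monoid_mult) set) \<Rightarrow> 'q \<Rightarrow> 'q set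
     \<Rightarrow> 'm set \<Rightarrow> 'm set \<Rightarrow> 'a list set" where
  "rat_lang Q Sig delta q0 Qa I0 I1 =
     {w \<in> lists Sig. \<exists>q x x0. q \<in> Qa \<and> run_M delta q0 w x q \<and> x0 \<in> I0 \<and> x0 * x \<in> I1}"

text \<open>The family L_Rat(M) (state sets taken, w.l.o.g., as finite sets of naturals).\<close>

definition LRat :: "'m::monoid_mult itself \<Rightarrow> 'a list set set" where
  "LRat _ = {L. \<exists>(Q :: nat set) (Sig :: 'a set) (delta :: nat \<Rightarrow> 'a option \<Rightarrow> (nat \<times> 'm) set)
                 q0 Qa (I0 :: 'm set) I1.
       is_M_automaton Q Sig delta q0 Qa \<and> I0 \<in> rat_subsets \<and> I1 \<in> rat_subsets \<and>
       L = rat_lang Q Sig delta q0 Qa I0 I1}"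

end

theory Submission
  imports Defs "HOL-Library.FuncSet"
begin

text \<open>Follow an accepting run along the factorization \<open>w = w\<^sub>1 \<cdots> w\<^sub>m\<close>. With
  \<open>m = |Q| k + 1\<close> there are \<open>m + 1\<close> block boundaries, so by pigeonhole some state \<open>q\<close>
  is visited at \<open>k + 1\<close> boundaries \<open>i\<^sub>0 < \<cdots> < i\<^sub>k\<close>. The factors \<open>W\<^sub>j\<close> between
  consecutive such boundaries are then loops at \<open>q\<close> and can be traversed in any order;
  \<open>k\<close>-permutability of \<open>M\<close> provides an order \<open>\<sigma> \<noteq> id\<close> for which the register value,
  and hence acceptance, is unchanged.\<close>

lemma take_drop_eq_map_nth: "b \<le> length xs \<Longrightarrow> take (b - a) (drop a xs) = map ((!) xs) [a..<b]"
  by (rule nth_equalityI) auto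

lemma upt_append_upt: "a \<le> b \<Longrightarrow> b \<le> c \<Longrightarrow> [a..<b] @ [b..<c] = [a..<c]"
  using upt_add_eq_append[of a b "c - b"] by simp

lemma chain_le_mono:
  assumes "\<forall>j<k. i j \<le> i (Suc j)" and "j \<le> j'" and "j' \<le> (k::nat)"
  shows "i j \<le> (i j' :: nat)"
  using assms(2,3)
proof (induction j' rule: dec_induct)
  case (step n)
  then have "i j \<le> i n" and "i n \<le> i (Suc n)"
    using assms(1) by simp_all
  then show ?case by (rule le_trans)
qed simp

lemma concat_upt_segments:
  assumes "\<forall>j<k. i j \<le> i (Suc j)"
  shows "concat (map (\<lambda>j. [i (j - 1)..<i j]) [1..<k+1]) = [i 0..<i k]"
  using assms
proof (induction k)
  case (Suc k)
  have "i 0 \<le> i k" and "i k \<le> i (Suc k)"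
    using chain_le_mono[OF Suc.prems] by auto
  then show ?case
    using Suc by (simp add: upt_append_upt)
qed simp

lemma concat_map_concat_map:
  "concat (map (\<lambda>j. concat (map f (g j))) xs) = concat (map f (concat (map g xs)))"
  by (induction xs) simp_all

lemma prod_list_map_prod_list_map:
  "prod_list (map (\<lambda>j. prod_list (map f (g j))) xs) = prod_list (map f (concat (map g xs)))"
  by (induction xs) simp_all

lemma concat_eq_blocks:
  assumes "\<forall>j<k. i j \<le> i (Suc j)" and "i k \<le> length ws"
  shows "concat ws = concat (take (i 0) ws)
    @ concat (map (\<lambda>j. concat (take (i j - i (j - 1)) (drop (i (j - 1)) ws))) [1..<k+1])
    @ concat (drop (i k) ws)"
proof -
  have "i 0 \<le> i k" using chain_le_mono[OF assms(1)] by simp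
  have "map (\<lambda>j. concat (take (i j - i (j - 1)) (drop (i (j - 1)) ws))) [1..<k+1]
      = map (\<lambda>j. concat (map ((!) ws) [i (j - 1)..<i j])) [1..<k+1]"
  proof (rule map_cong)
    fix j assume "j \<in> set [1..<k+1]"
    then have "i j \<le> length ws"
      using chain_le_mono[OF assms(1), of j k] assms(2) by auto
    then show "concat (take (i j - i (j - 1)) (drop (i (j - 1)) ws))
        = concat (map ((!) ws) [i (j - 1)..<i j])"
      by (simp add: take_drop_eq_map_nth)
  qed simp
  then have blocks:
    "concat (map (\<lambda>j. concat (take (i j - i (j - 1)) (drop (i (j - 1)) ws))) [1..<k+1])
      = concat (map ((!) ws) [i 0..<i k])"
    by (simp only: concat_map_concat_map concat_upt_segments[OF assms(1)])
  have "concat (take (i 0) ws) = concat (map ((!) ws) [0..<i 0])"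
    using take_drop_eq_map_nth[of "i 0" ws 0] \<open>i 0 \<le> i k\<close> assms(2) by simp
  moreover have "concat (drop (i k) ws) = concat (map ((!) ws) [i k..<length ws])"
    using take_drop_eq_map_nth[of "length ws" ws "i k"] by simp
  moreover have "concat ws = concat (map ((!) ws) ([0..<i 0] @ [i 0..<i k] @ [i k..<length ws]))"
    using \<open>i 0 \<le> i k\<close> assms(2) by (simp only: upt_append_upt zero_le map_nth)
  ultimately show ?thesis
    using blocks by simp
qed

lemma prod_list_eq_blocks:
  fixes xs :: "nat \<Rightarrow> 'm::monoid_mult"
  assumes "\<forall>j<k. i j \<le> i (Suc j)" and "i k \<le> n"
  shows "prod_list (map xs [0..<n]) = prod_list (map xs [0..<i 0])
    * prod_list (map (\<lambda>j. prod_list (map xs [i (j - 1)..<i j])) [1..<k+1])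
    * prod_list (map xs [i k..<n])"
proof -
  have "i 0 \<le> i k" using chain_le_mono[OF assms(1)] by simp
  then have "[0..<n] = [0..<i 0] @ [i 0..<i k] @ [i k..<n]"
    using assms(2) by (simp only: upt_append_upt zero_le)
  then show ?thesis
    by (simp only: prod_list_map_prod_list_map concat_upt_segments[OF assms(1)] map_append
        prod_list.append mult.assoc)
qed

lemma run_M_append:
  "run_M d q u x q' \<Longrightarrow> run_M d q' v y q'' \<Longrightarrow> run_M d q (u @ v) (x * y) q''"
proof (induction rule: run_M.induct)
  case (read q' m q a w x q1)
  from run_M.read[where delta = d, OF read.hyps(1) read.IH[OF read.prems]] show ?case
    by (simp add: mult.assoc)
next
  case (eps q' m q w x q1)
  from run_M.eps[where delta = d, OF eps.hyps(1) eps.IH[OF eps.prems]] show ?case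
    by (simp add: mult.assoc)
qed simp

lemma run_M_split:
  "run_M d q (u @ v) x q'' \<Longrightarrow> \<exists>q' y z. run_M d q u y q' \<and> run_M d q' v z q'' \<and> x = y * z"
proof (induction "u @ v" x q'' arbitrary: u rule: run_M.induct)
  case nil
  then show ?case by (metis Nil_is_append_conv mult_1 run_M.nil)
next
  case (read q' m q a w x q'')
  show ?case
  proof (cases u)
    case Nil
    have "run_M d q (a # w) (m * x) q''"
      using run_M.read[where delta = d, OF \<open>(q', m) \<in> d q (Some a)\<close> \<open>run_M d q' w x q''\<close>] .
    with Nil \<open>a # w = u @ v\<close> show ?thesis
      by (metis append_Nil mult_1 run_M.nil)
  next
    case (Cons b u')
    with read obtain q1 y z where "b = a" "run_M d q' u' y q1" "run_M d q1 v z q''" "x = y * z"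
      by auto
    then show ?thesis
      using run_M.read[where delta = d, OF \<open>(q', m) \<in> d q (Some a)\<close>] Cons by (metis mult.assoc)
  qed
next
  case (eps q' m q x q'')
  then obtain q1 y z where "run_M d q' u y q1" "run_M d q1 v z q''" "x = y * z"
    by blast
  then show ?case
    using run_M.eps[where delta = d, OF eps.hyps(1)] by (metis mult.assoc)
qed

lemma run_M_closed:
  assumes "\<forall>q \<in> Q. \<forall>a. fst ` d q a \<subseteq> Q"
  shows "run_M d q w x q' \<Longrightarrow> q \<in> Q \<Longrightarrow> q' \<in> Q"
  by (induction rule: run_M.induct) (use assms in force)+

lemma run_M_concat_trace:
  assumes "run_M d q (concat ws) x q'" and "ws \<noteq> []"
  shows "\<exists>st xs. st 0 = q \<and> st (length ws) = q' \<and>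
    (\<forall>j<length ws. run_M d (st j) (ws ! j) (xs j) (st (Suc j))) \<and>
    x = prod_list (map xs [0..<length ws])"
  using assms
proof (induction ws arbitrary: q x)
  case (Cons u ws)
  show ?case
  proof (cases "ws = []")
    case True
    with Cons.prems show ?thesis
      by (intro exI[of _ "\<lambda>j. if j = 0 then q else q'"] exI[of _ "\<lambda>_. x"]) auto
  next
    case False
    from run_M_split[of d q u "concat ws" x q'] Cons.prems obtain q1 y z
      where "run_M d q u y q1" "run_M d q1 (concat ws) z q'" "x = y * z"
      by auto
    moreover from this(2) Cons.IH False obtain st xs where "st 0 = q1" "st (length ws) = q'"
      "\<forall>j<length ws. run_M d (st j) (ws ! j) (xs j) (st (Suc j))"
      "z = prod_list (map xs [0..<length ws])"
      by blast
    ultimately show ?thesis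
      by (intro exI[of _ "case_nat q st"] exI[of _ "case_nat y xs"])
        (auto simp del: upt_Suc simp: map_upt_Suc less_Suc_eq_0_disj)
  qed
qed simp

lemma run_M_concat_upt:
  assumes "a \<le> b" and "\<forall>j\<in>{a..<b}. run_M d (st j) (f j) (xs j) (st (Suc j))"
  shows "run_M d (st a) (concat (map f [a..<b])) (prod_list (map xs [a..<b])) (st b)"
  using assms
proof (induction b rule: dec_induct)
  case base
  show ?case by (simp add: run_M.nil)
next
  case (step n)
  then have "run_M d (st a) (concat (map f [a..<n])) (prod_list (map xs [a..<n])) (st n)"
    and "run_M d (st n) (f n) (xs n) (st (Suc n))"
    by auto
  from run_M_append[OF this] show ?case
    using step(1) by simp
qed

lemma run_M_trace_segment:
  assumes "\<forall>j<length ws. run_M d (st j) (ws ! j) (xs j) (st (Suc j))"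
    and "a \<le> b" and "b \<le> length ws"
  shows "run_M d (st a) (concat (take (b - a) (drop a ws))) (prod_list (map xs [a..<b])) (st b)"
  using run_M_concat_upt[of a b d st "(!) ws" xs] assms by (simp add: take_drop_eq_map_nth)

lemma run_M_concat_loops:
  "\<forall>j\<in>set js. run_M d q (W j) (y j) q \<Longrightarrow>
    run_M d q (concat (map W js)) (prod_list (map y js)) q"
  by (induction js) (auto intro: run_M.nil run_M_append)

lemma run_M_permute_loops:
  assumes "run_M d q u x p" and "run_M d p v z q'"
    and "\<forall>j\<in>{1..k}. run_M d p (W j) (y j) p" and "\<sigma> permutes {1..k}"
  shows "run_M d q (u @ concat (map (W \<circ> \<sigma>) [1..<k+1]) @ v)
    (x * prod_list (map (y \<circ> \<sigma>) [1..<k+1]) * z) q'"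
proof -
  have "\<forall>j\<in>set (map \<sigma> [1..<k+1]). run_M d p (W j) (y j) p"
    using assms(3) permutes_in_image[OF assms(4)] by auto
  from run_M_concat_loops[OF this]
  have "run_M d p (concat (map (W \<circ> \<sigma>) [1..<k+1])) (prod_list (map (y \<circ> \<sigma>) [1..<k+1])) p"
    by simp
  from run_M_append[OF assms(1) run_M_append[OF this assms(2)]] show ?thesis
    by (simp add: mult.assoc)
qed

lemma set_concat_map_permutes:
  assumes "\<sigma> permutes {1..k}"
  shows "set (concat (map (W \<circ> \<sigma>) [1..<k+1])) = set (concat (map W [1..<k+1]))"
proof -
  have "\<sigma> ` {1..<k+1} = {1..<k+1}"
    using permutes_image[OF assms] by (simp add: atLeastLessThanSuc_atLeastAtMost)
  then show ?thesis
    by (simp only: set_concat set_map set_upt image_comp[symmetric])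
qed

lemma card_gt_imp_increasing_seq:
  fixes S :: "nat set"
  assumes "finite S" and "k < card S"
  shows "\<exists>i. (\<forall>j<k. i j < i (Suc j)) \<and> (\<forall>j\<le>k. i j \<in> S)"
proof -
  define l where "l = sorted_list_of_set S"
  have "sorted_wrt (<) l" "set l = S" "length l = card S"
    using assms(1) by (simp_all add: l_def)
  with assms(2) show ?thesis
    by (intro exI[of _ "(!) l"]) (auto simp: sorted_wrt_nth_less dest: nth_mem)
qed

lemma pigeonhole_increasing_seq:
  assumes "finite Q" and "\<forall>j\<le>m. f j \<in> Q" and "card Q * k \<le> m"
  shows "\<exists>q i. (\<forall>j<k. i j < i (Suc j)) \<and> (\<forall>j\<le>k. i j \<le> m \<and> f (i j) = q)"
proof -
  have "f \<in> {..m} \<rightarrow> Q" and "Q \<noteq> {}"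
    using assms(2) by auto
  from pigeonhole_card[OF this(1) _ assms(1) this(2)] obtain q
    where "Suc m \<le> card (f -` {q} \<inter> {..m}) * card Q"
    by auto
  with assms(3) have "card Q * k < card Q * card (f -` {q} \<inter> {..m})"
    by (simp only: mult.commute[of _ "card Q"])
  then have "k < card (f -` {q} \<inter> {..m})"
    by simp
  then obtain i where "\<forall>j<k. i j < i (Suc j)" "\<forall>j\<le>k. i j \<in> f -` {q} \<inter> {..m}"
    using card_gt_imp_increasing_seq[of "f -` {q} \<inter> {..m}" k] by auto
  then show ?thesis
    by blast
qed

lemma run_M_trace_closed:
  assumes "\<forall>q \<in> Q. \<forall>a. fst ` d q a \<subseteq> Q" and "st 0 \<in> Q"
    and "\<forall>j<n. run_M d (st j) (f j) (xs j) (st (Suc j))"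
  shows "j \<le> n \<Longrightarrow> st j \<in> Q"
proof (induction j)
  case (Suc j)
  then show ?case
    using run_M_closed[OF assms(1)] assms(3) by (meson Suc_le_lessD less_imp_le)
qed (use assms(2) in simp)

lemma run_M_trace_permute_blocks:
  fixes xs :: "nat \<Rightarrow> 'm::monoid_mult"
  assumes perm: "k_permutable k TYPE('m)"
    and trace: "\<forall>j<length ws. run_M d (st j) (ws ! j) (xs j) (st (Suc j))"
    and mono: "\<forall>j<k. i j \<le> i (Suc j)" and "i k \<le> length ws"
    and loop: "\<forall>j\<le>k. st (i j) = q"
  shows "\<exists>\<sigma>. \<sigma> permutes {1..k} \<and> \<sigma> \<noteq> id \<and>
    run_M d (st 0) (concat (take (i 0) ws)
      @ concat (map ((\<lambda>j. concat (take (i j - i (j - 1)) (drop (i (j - 1)) ws))) \<circ> \<sigma>) [1..<k+1])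
      @ concat (drop (i k) ws)) (prod_list (map xs [0..<length ws])) (st (length ws))"
proof -
  define W where "W j = concat (take (i j - i (j - 1)) (drop (i (j - 1)) ws))" for j
  define y where "y j = prod_list (map xs [i (j - 1)..<i j])" for j
  from perm obtain \<sigma> where \<sigma>: "\<sigma> permutes {1..k}" "\<sigma> \<noteq> id"
    and y\<sigma>: "prod_list (map y [1..<k+1]) = prod_list (map (y \<circ> \<sigma>) [1..<k+1])"
    unfolding k_permutable_def by blast
  have "i 0 \<le> i k"
    using chain_le_mono[OF mono] by simp
  have loops: "\<forall>j\<in>{1..k}. run_M d q (W j) (y j) q"
  proof
    fix j assume "j \<in> {1..k}"
    then have "i (j - 1) \<le> i j" "i j \<le> length ws" "st (i (j - 1)) = q" "st (i j) = q"
      using chain_le_mono[OF mono, of "j - 1" j] chain_le_mono[OF mono, of j k] \<open>i k \<le> length ws\<close> loop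
      by auto
    then show "run_M d q (W j) (y j) q"
      using run_M_trace_segment[OF trace, of "i (j - 1)" "i j"] unfolding W_def y_def by simp
  qed
  have prefix: "run_M d (st 0) (concat (take (i 0) ws)) (prod_list (map xs [0..<i 0])) q"
    using run_M_trace_segment[OF trace, of 0 "i 0"] loop \<open>i 0 \<le> i k\<close> \<open>i k \<le> length ws\<close>
    by auto
  have suffix: "run_M d q (concat (drop (i k) ws)) (prod_list (map xs [i k..<length ws])) (st (length ws))"
    using run_M_trace_segment[OF trace, of "i k" "length ws"] loop \<open>i k \<le> length ws\<close>
    by auto
  have "prod_list (map xs [0..<length ws]) = prod_list (map xs [0..<i 0])
      * prod_list (map (y \<circ> \<sigma>) [1..<k+1]) * prod_list (map xs [i k..<length ws])"
    unfolding y\<sigma>[symmetric] y_def using prod_list_eq_blocks[OF mono \<open>i k \<le> length ws\<close>] .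
  with run_M_permute_loops[OF prefix suffix loops \<sigma>(1)] \<sigma> show ?thesis
    unfolding W_def[abs_def] by auto
qed

lemma rat_lang_block_permutation:
  assumes aut: "is_M_automaton Q Sig delta q0 Qa"
    and perm: "k_permutable k TYPE('m::monoid_mult)"
    and w: "w \<in> rat_lang Q Sig delta q0 Qa I0 (I1 :: 'm set)"
    and ws: "concat ws = w" "card Q * k < length ws"
  shows "\<exists>i. (\<forall>j<k. i j < i (Suc j)) \<and> i k \<le> length ws \<and>
    (let lam = concat (take (i 0) ws);
         W = (\<lambda>j. concat (take (i j - i (j - 1)) (drop (i (j - 1)) ws)));
         mu = concat (drop (i k) ws)
     in w = lam @ concat (map W [1..<k+1]) @ mu \<and>
        (\<exists>\<sigma>. \<sigma> permutes {1..k} \<and> \<sigma> \<noteq> id \<and>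
           lam @ concat (map (W \<circ> \<sigma>) [1..<k+1]) @ mu \<in> rat_lang Q Sig delta q0 Qa I0 I1))"
proof -
  have "finite Q" "q0 \<in> Q" and closed: "\<forall>q \<in> Q. \<forall>a. fst ` delta q a \<subseteq> Q"
    using aut unfolding is_M_automaton_def by auto
  from w obtain qf x x0 where "w \<in> lists Sig" "qf \<in> Qa" "run_M delta q0 w x qf"
    "x0 \<in> I0" "x0 * x \<in> I1"
    unfolding rat_lang_def by blast
  moreover have "ws \<noteq> []"
    using ws(2) by auto
  ultimately obtain st xs where "st 0 = q0" "st (length ws) = qf"
    and trace: "\<forall>j<length ws. run_M delta (st j) (ws ! j) (xs j) (st (Suc j))"
    and x: "x = prod_list (map xs [0..<length ws])"
    using run_M_concat_trace[of delta q0 ws x qf] ws(1) by blast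
  with run_M_trace_closed[OF closed _ trace] \<open>q0 \<in> Q\<close>
    pigeonhole_increasing_seq[of Q "length ws" st k] \<open>finite Q\<close> ws(2)
  obtain q i where inc: "\<forall>j<k. i j < i (Suc j)" and loop: "\<forall>j\<le>k. i j \<le> length ws \<and> st (i j) = q"
    by fastforce
  then have mono: "\<forall>j<k. i j \<le> i (Suc j)" and "i k \<le> length ws"
    by (auto simp: less_imp_le)
  define W where "W j = concat (take (i j - i (j - 1)) (drop (i (j - 1)) ws))" for j
  from run_M_trace_permute_blocks[OF perm trace mono \<open>i k \<le> length ws\<close>] loop
  obtain \<sigma> where \<sigma>: "\<sigma> permutes {1..k}" "\<sigma> \<noteq> id"
    and "run_M delta q0 (concat (take (i 0) ws) @ concat (map (W \<circ> \<sigma>) [1..<k+1])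
      @ concat (drop (i k) ws)) x qf"
    unfolding W_def[abs_def] x \<open>st 0 = q0\<close> \<open>st (length ws) = qf\<close> by blast
  moreover have w_eq: "w = concat (take (i 0) ws) @ concat (map W [1..<k+1]) @ concat (drop (i k) ws)"
    using concat_eq_blocks[OF mono \<open>i k \<le> length ws\<close>] ws(1) unfolding W_def[abs_def] by simp
  moreover have "set (concat (take (i 0) ws) @ concat (map (W \<circ> \<sigma>) [1..<k+1]) @ concat (drop (i k) ws))
      = set w"
    using set_concat_map_permutes[OF \<sigma>(1), of W] w_eq by simp
  ultimately have "concat (take (i 0) ws) @ concat (map (W \<circ> \<sigma>) [1..<k+1]) @ concat (drop (i k) ws)
      \<in> rat_lang Q Sig delta q0 Qa I0 I1"
    using \<open>w \<in> lists Sig\<close> \<open>qf \<in> Qa\<close> \<open>x0 \<in> I0\<close> \<open>x0 * x \<in> I1\<close>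
    unfolding rat_lang_def in_lists_conv_set by blast
  with w_eq inc \<open>i k \<le> length ws\<close> \<sigma> show ?thesis
    unfolding Let_def W_def[abs_def] by blast
qed

theorem lemma2:
  fixes k :: nat and L :: "'a list set"
  assumes "k \<ge> 2"
    and "k_permutable k TYPE('m::monoid_mult)"
    and "L \<in> LRat TYPE('m)"
  shows "\<exists>m::nat. m > 0 \<and>
    (\<forall>w \<in> L. \<forall>ws :: 'a list list.
       length w \<ge> m \<and> length ws = m \<and> (\<forall>u \<in> set ws. u \<noteq> []) \<and> concat ws = w \<longrightarrow>
       (\<exists>i :: nat \<Rightarrow> nat. (\<forall>j < k. i j < i (Suc j)) \<and> i k \<le> m \<and>
          (let lam = concat (take (i 0) ws);
               W = (\<lambda>j. concat (take (i j - i (j - 1)) (drop (i (j - 1)) ws)));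
               mu = concat (drop (i k) ws)
           in w = lam @ concat (map W [1..<k+1]) @ mu \<and>
              (\<exists>\<sigma>. \<sigma> permutes {1..k} \<and> \<sigma> \<noteq> id \<and>
                   lam @ concat (map (W \<circ> \<sigma>) [1..<k+1]) @ mu \<in> L))))"
proof -
  from assms(3) obtain Q :: "nat set" and Sig :: "'a set" and delta :: "nat \<Rightarrow> 'a option \<Rightarrow> (nat \<times> 'm) set"
    and q0 Qa I0 I1 where aut: "is_M_automaton Q Sig delta q0 Qa"
    and L: "L = rat_lang Q Sig delta q0 Qa I0 I1"
    unfolding LRat_def by blast
  show ?thesis
  proof (intro exI[of _ "card Q * k + 1"] conjI ballI allI impI)
    fix w ws
    assume "w \<in> L" and "length w \<ge> card Q * k + 1 \<and> length ws = card Q * k + 1 \<and>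
      (\<forall>u \<in> set ws. u \<noteq> []) \<and> concat ws = w"
    then have w: "w \<in> rat_lang Q Sig delta q0 Qa I0 I1" and "concat ws = w"
      and m: "length ws = card Q * k + 1"
      unfolding L by auto
    from rat_lang_block_permutation[OF aut assms(2) w \<open>concat ws = w\<close>]
    show "\<exists>i. (\<forall>j < k. i j < i (Suc j)) \<and> i k \<le> card Q * k + 1 \<and>
          (let lam = concat (take (i 0) ws);
               W = (\<lambda>j. concat (take (i j - i (j - 1)) (drop (i (j - 1)) ws)));
               mu = concat (drop (i k) ws)
           in w = lam @ concat (map W [1..<k+1]) @ mu \<and>
              (\<exists>\<sigma>. \<sigma> permutes {1..k} \<and> \<sigma> \<noteq> id \<and>
                   lam @ concat (map (W \<circ> \<sigma>) [1..<k+1]) @ mu \<in> L))"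
      unfolding L m by simp
  qed simp
qed

end
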